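(* Let $|\cdot|$ be a measurable norm on a separable, infinite-dimensional, real Hilbert space $H$, and let $M_0\subset H$ be a closed subspace with $\dim M_0=\infty$. Then there is a measurably adapted sequence $(F_n)_{n\geq1}$ of closed subspaces of $H$ with $F_1\supset F_0:=M_0^\perp$ and $\dim(F_1\cap M_0)<\infty$. Moreover, the linear span of the subspaces $F_n\cap F_{n-1}^\perp$, $n\geq 1$, is dense in $M_0$.
   Context: A norm $|\cdot|$ on a real separable Hilbert space $H$ is a measurable norm if for every $\epsilon>0$ there is a finite-dimensional subspace $F_0\subset H$ such that $\mathrm{Gauss}[v\in F_1: |v|>\epsilon]<\epsilon$ for every finite-dimensional subspace $F_1\subset H$ orthogonal to $F_0$, where $\mathrm{Gauss}$ is standard Gaussian measure on $F_1$. A sequence $(F_n)_{n\geq1}$ of closed subspaces of $H$ is measurably adapted if: (i) $F_1\subset F_2\subset\cdots$; (ii) $1\leq\dim(F_{n+1}\cap F_n^\perp)<\infty$ for all $n\ge1$; (iii) $\bigcup_n F_n$ is dense in $H$; (iv) for every $n\ge1$, $\mathrm{Gauss}[v\in F_{n+1}\cap F_n^\perp: |v|>2^{-n}]<2^{-n}$, with $\mathrm{Gauss}$ the standard Gaussian measure on $F_{n+1}\cap F_n^\perp$. *)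

theory Defs
  imports "HOL-Analysis.Analysis" "HOL-Probability.Probability"
begin

text \<open>A (not necessarily continuous) norm on a real vector space.\<close>
definition is_norm :: "('a::real_vector \<Rightarrow> real) \<Rightarrow> bool" where
  "is_norm N \<longleftrightarrow> (\<forall>x y. N (x + y) \<le> N x + N y) \<and> (\<forall>c x. N (c *\<^sub>R x) = \<bar>c\<bar> * N x)
     \<and> (\<forall>x. N x = 0 \<longrightarrow> x = 0)"

definition fin_dim_subspace :: "'a::real_vector set \<Rightarrow> bool" where
  "fin_dim_subspace F \<longleftrightarrow> subspace F \<and> (\<exists>B. finite B \<and> span B = F)"

definition onb_list :: "'a::real_inner set \<Rightarrow> 'a list" where
  "onb_list F = (SOME e. (\<forall>i<length e. \<forall>j<length e. e!i \<bullet> e!j = (if i = j then 1 else 0))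
                          \<and> span (set e) = F)"

text \<open>Standard Gaussian measure on a finite-dimensional subspace F of the set A:
  the law of the sum of g_i e_i, with (e_i) an orthonormal basis of F and g_i iid N(0,1).
  (By rotation invariance this does not depend on the chosen basis.)\<close>
definition gauss :: "'a::real_inner set \<Rightarrow> 'a set \<Rightarrow> real" where
  "gauss F A = (let e = onb_list F; k = length e;
                    M = PiM {..<k} (\<lambda>_. density lborel std_normal_density)
                in measure M {x \<in> space M. (\<Sum>i<k. x i *\<^sub>R e!i) \<in> A})"

definition measurable_norm :: "('a::real_inner \<Rightarrow> real) \<Rightarrow> bool" where
  "measurable_norm N \<longleftrightarrow> is_norm N \<and>
     (\<forall>\<epsilon>>0. \<exists>F0. fin_dim_subspace F0 \<and>
        (\<forall>F1. fin_dim_subspace F1 \<and> F1 \<subseteq> orthogonal_comp F0 \<longrightarrow>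
              gauss F1 {v \<in> F1. N v > \<epsilon>} < \<epsilon>))"

text \<open>Measurably adapted sequence (F n) for n \<ge> 1 (the value F 0 is irrelevant here).\<close>
definition measurably_adapted :: "('a::real_inner \<Rightarrow> real) \<Rightarrow> (nat \<Rightarrow> 'a set) \<Rightarrow> bool" where
  "measurably_adapted N F \<longleftrightarrow>
     (\<forall>n\<ge>1. closed (F n) \<and> subspace (F n)) \<and>
     (\<forall>n\<ge>1. F n \<subseteq> F (Suc n)) \<and>
     (\<forall>n\<ge>1. fin_dim_subspace (F (Suc n) \<inter> orthogonal_comp (F n))
            \<and> 1 \<le> dim (F (Suc n) \<inter> orthogonal_comp (F n))) \<and>
     closure (\<Union>n\<in>{1..}. F n) = UNIV \<and>
     (\<forall>n\<ge>1. gauss (F (Suc n) \<inter> orthogonal_comp (F n))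
              {v \<in> F (Suc n) \<inter> orthogonal_comp (F n). N v > 1 / 2 ^ n} < 1 / 2 ^ n)"

end

theory Submission
  imports Defs
begin

text \<open>
  Take F n = M0\<bottom> + span (B n) for an increasing chain of finite
  orthonormal sets B 0 = {} \<subset> B 1 \<subset> ... inside M0, so that the increments
  F (n+1) \<inter> (F n)\<bottom> are span (B (n+1) - B n) \<subseteq> M0. The measurable-norm hypothesis yields
  finite-dimensional subspaces G n whose orthogonal complements carry the Gaussian bound at
  level 1/2^n. A vector of M0 is orthogonal to G n as soon as it is orthogonal to the orthogonal
  projection of G n onto M0, so it suffices to put that finite-dimensional projection into
  span (B n) before choosing B (n+1). Interleaving this with the projections of a dense
  sequence makes the union of the span (B n) dense in M0, and the orthogonal decomposition
  H = M0 + M0\<bottom> then gives density of the F n.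
\<close>

section \<open>Orthogonal projection onto a closed subspace\<close>

lemma orthogonal_comp_iff: "x \<in> orthogonal_comp M \<longleftrightarrow> (\<forall>y\<in>M. y \<bullet> x = 0)"
  by (simp add: orthogonal_comp_def orthogonal_def)

lemma closed_orthogonal_comp: "closed (orthogonal_comp M)"
proof -
  have "orthogonal_comp M = (\<Inter>y\<in>M. {x. y \<bullet> x = 0})" by (auto simp: orthogonal_comp_iff)
  then show ?thesis by (simp add: closed_INT closed_hyperplane)
qed

lemma parallelogram_law:
  fixes x y :: "'a::real_inner"
  shows "(norm (x + y))\<^sup>2 + (norm (x - y))\<^sup>2 = 2 * (norm x)\<^sup>2 + 2 * (norm y)\<^sup>2"
  by (simp add: power2_norm_eq_inner inner_add inner_diff inner_commute)

lemma nearest_point_exists: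
  fixes x :: "'a::{real_inner,complete_space}"
  assumes S: "closed S" "convex S" "S \<noteq> {}"
  obtains p where "p \<in> S" "\<And>y. y \<in> S \<Longrightarrow> norm (x - p) \<le> norm (x - y)"
proof -
  define d where "d = infdist x S"
  have "\<exists>y\<in>S. dist x y < d + 1 / Suc k" for k :: nat
  proof -
    have "(INF a\<in>S. dist x a) < d + 1 / Suc k"
      using infdist_notempty[OF S(3)] by (simp add: d_def)
    then show ?thesis using S(3) by (subst (asm) cINF_less_iff) (auto intro: bdd_belowI2[of _ 0])
  qed
  then obtain y where yS: "\<And>k. y k \<in> S" and y_close: "\<And>k. dist x (y k) < d + 1 / Suc k"
    by metis
  have "(\<lambda>k. dist x (y k)) \<longlonglongrightarrow> d"
  proof (rule tendsto_sandwich)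
    show "\<forall>\<^sub>F k in sequentially. d \<le> dist x (y k)"
      using yS by (simp add: d_def infdist_le)
    show "\<forall>\<^sub>F k in sequentially. dist x (y k) \<le> d + 1 / Suc k"
      using y_close by (intro always_eventually allI less_imp_le)
    show "(\<lambda>k. d + 1 / Suc k) \<longlonglongrightarrow> d"
      using tendsto_add[OF tendsto_const LIMSEQ_inverse_real_of_nat, of d]
      by (simp add: inverse_eq_divide)
  qed simp
  then have lim: "(\<lambda>k. (dist x (y k))\<^sup>2) \<longlonglongrightarrow> d\<^sup>2"
    by (intro tendsto_intros)
  have d_le: "2 * d \<le> norm ((x - y j) + (x - y k))" for j k
  proof -
    have "(1/2) *\<^sub>R (y j + y k) \<in> S"
      using convexD[OF S(2) yS yS, of "1/2" "1/2"] by (simp add: scaleR_add_right)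
    then have "d \<le> norm (x - (1/2) *\<^sub>R (y j + y k))"
      by (metis d_def dist_norm infdist_le)
    moreover have "(x - y j) + (x - y k) = 2 *\<^sub>R (x - (1/2) *\<^sub>R (y j + y k))"
      by (simp add: algebra_simps scaleR_2)
    ultimately show ?thesis by simp
  qed
  \<comment> \<open>the parallelogram law at the midpoint bounds the distance between two approximants\<close>
  have dist_sq: "(dist (y j) (y k))\<^sup>2 \<le> 2 * (dist x (y j))\<^sup>2 + 2 * (dist x (y k))\<^sup>2 - 4 * d\<^sup>2"
    for j k
  proof -
    have "(2 * d)\<^sup>2 \<le> (norm ((x - y j) + (x - y k)))\<^sup>2"
      using d_le[of j k] infdist_nonneg[of x S] by (intro power_mono) (auto simp: d_def)
    moreover have "(x - y j) - (x - y k) = y k - y j" by simp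
    ultimately show ?thesis
      using parallelogram_law[of "x - y j" "x - y k"]
      by (simp add: dist_norm norm_minus_commute power_mult_distrib)
  qed
  have "Cauchy y"
  proof (rule metric_CauchyI)
    fix \<epsilon> :: real assume "\<epsilon> > 0"
    then have "\<forall>\<^sub>F k in sequentially. dist ((dist x (y k))\<^sup>2) (d\<^sup>2) < \<epsilon>\<^sup>2 / 4"
      using lim \<open>\<epsilon> > 0\<close> unfolding tendsto_iff by (metis divide_pos_pos zero_less_numeral zero_less_power)
    then obtain K where K: "\<And>k. k \<ge> K \<Longrightarrow> \<bar>(dist x (y k))\<^sup>2 - d\<^sup>2\<bar> < \<epsilon>\<^sup>2 / 4"
      by (auto simp: eventually_sequentially dist_real_def)
    have "dist (y j) (y k) < \<epsilon>" if "j \<ge> K" "k \<ge> K" for j k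
    proof -
      have "(dist (y j) (y k))\<^sup>2 < \<epsilon>\<^sup>2"
        using dist_sq[of j k] K[OF that(1)] K[OF that(2)] by linarith
      then show ?thesis using \<open>\<epsilon> > 0\<close> by (simp add: power_less_imp_less_base)
    qed
    then show "\<exists>K. \<forall>j\<ge>K. \<forall>k\<ge>K. dist (y j) (y k) < \<epsilon>" by blast
  qed
  then obtain p where "y \<longlonglongrightarrow> p" using convergent_eq_Cauchy by blast
  then have "p \<in> S" using S(1) yS closed_sequentially by blast
  moreover have "dist x p = d"
    using LIMSEQ_unique[OF tendsto_dist[OF tendsto_const \<open>y \<longlonglongrightarrow> p\<close>]
          \<open>(\<lambda>k. dist x (y k)) \<longlonglongrightarrow> d\<close>] .
  ultimately show ?thesis
    using that by (metis d_def dist_norm infdist_le)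
qed

lemma nearest_point_subspace_orthogonal:
  fixes x :: "'a::real_inner"
  assumes M: "subspace M" and p: "p \<in> M" and nearest: "\<And>y. y \<in> M \<Longrightarrow> norm (x - p) \<le> norm (x - y)"
  shows "x - p \<in> orthogonal_comp M"
  unfolding orthogonal_comp_def orthogonal_def
proof (intro CollectI ballI)
  fix m assume "m \<in> M"
  define v c where "v = x - p" and "c = m \<bullet> v"
  show "m \<bullet> (x - p) = 0"
  proof (cases "m = 0")
    case False
    then have mm: "m \<bullet> m > 0" by simp
    define t where "t = c / (m \<bullet> m)"
    \<comment> \<open>moving from p towards the orthogonal projection of v onto m decreases the distance by c^2/|m|^2\<close>
    have "p + t *\<^sub>R m \<in> M" using M p \<open>m \<in> M\<close> by (simp add: subspace_add subspace_scale)
    then have "(norm v)\<^sup>2 \<le> (norm (v - t *\<^sub>R m))\<^sup>2"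
      using nearest by (simp add: v_def algebra_simps power_mono)
    also have "\<dots> = v \<bullet> v - 2 * t * c + t\<^sup>2 * (m \<bullet> m)"
      unfolding power2_norm_eq_inner by (simp add: inner_diff c_def inner_commute algebra_simps power2_eq_square)
    also have "\<dots> = (norm v)\<^sup>2 - c\<^sup>2 / (m \<bullet> m)"
      using mm by (simp add: t_def dot_square_norm field_simps power2_eq_square)
    finally have "c\<^sup>2 / (m \<bullet> m) \<le> 0" by simp
    then show ?thesis using mm by (simp add: c_def v_def divide_le_0_iff)
  qed simp
qed

definition proj :: "'a::real_inner set \<Rightarrow> 'a \<Rightarrow> 'a" where
  "proj M x = (SOME p. p \<in> M \<and> x - p \<in> orthogonal_comp M)"

lemma
  fixes M :: "'a::{real_inner,complete_space} set"
  assumes "closed M" "subspace M"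
  shows proj_in: "proj M x \<in> M"
    and proj_residual_orthogonal: "x - proj M x \<in> orthogonal_comp M"
proof -
  have "convex M" "M \<noteq> {}" using assms subspace_imp_convex subspace_0 by blast+
  then obtain p where "p \<in> M" "\<And>y. y \<in> M \<Longrightarrow> norm (x - p) \<le> norm (x - y)"
    using nearest_point_exists assms(1) by metis
  then have "\<exists>p. p \<in> M \<and> x - p \<in> orthogonal_comp M"
    using nearest_point_subspace_orthogonal[OF assms(2)] by blast
  then have "proj M x \<in> M \<and> x - proj M x \<in> orthogonal_comp M"
    unfolding proj_def by (rule someI_ex)
  then show "proj M x \<in> M" "x - proj M x \<in> orthogonal_comp M" by auto
qed

lemma inner_proj_right:
  fixes M :: "'a::{real_inner,complete_space} set"
  assumes "closed M" "subspace M" "v \<in> M"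
  shows "v \<bullet> proj M x = v \<bullet> x"
proof -
  have "v \<bullet> (x - proj M x) = 0"
    using proj_residual_orthogonal[OF assms(1,2)] assms(3) by (simp add: orthogonal_comp_iff)
  then show ?thesis by (simp add: inner_diff_right)
qed

lemma dist_proj_le:
  fixes M :: "'a::{real_inner,complete_space} set"
  assumes "closed M" "subspace M" "m \<in> M"
  shows "dist (proj M x) m \<le> dist x m"
proof -
  have "proj M x - m \<in> M" using proj_in[OF assms(1,2)] assms subspace_diff by blast
  then have "orthogonal (proj M x - m) (x - proj M x)"
    using proj_residual_orthogonal[OF assms(1,2)] by (simp add: orthogonal_comp_iff orthogonal_def)
  then have "(norm ((proj M x - m) + (x - proj M x)))\<^sup>2
              = (norm (proj M x - m))\<^sup>2 + (norm (x - proj M x))\<^sup>2"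
    by (rule norm_add_Pythagorean)
  then show ?thesis by (simp add: dist_norm power2_le_imp_le)
qed

lemma closure_proj_image_dense:
  fixes M :: "'a::{real_inner,complete_space} set"
  assumes "closed M" "subspace M" "closure D = UNIV"
  shows "M \<subseteq> closure (proj M ` D)"
proof
  fix m assume "m \<in> M"
  show "m \<in> closure (proj M ` D)" unfolding closure_approachable
  proof (intro allI impI)
    fix e :: real assume "e > 0"
    then obtain y where "y \<in> D" "dist y m < e"
      using assms(3) closure_approachable by blast
    then show "\<exists>z\<in>proj M ` D. dist z m < e"
      using dist_proj_le[OF assms(1,2) \<open>m \<in> M\<close>, of y] by (intro bexI[of _ "proj M y"]) auto
  qed
qed

lemma orthogonal_comp_proj_image:
  fixes M :: "'a::{real_inner,complete_space} set"
  assumes "closed M" "subspace M"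
  shows "M \<inter> orthogonal_comp (proj M ` S) \<subseteq> orthogonal_comp (span S)"
proof
  fix v assume v: "v \<in> M \<inter> orthogonal_comp (proj M ` S)"
  have "orthogonal v y" if "y \<in> S" for y
    using v that inner_proj_right[OF assms, of v y]
    by (auto simp: orthogonal_comp_iff orthogonal_def inner_commute)
  then show "v \<in> orthogonal_comp (span S)"
    using orthogonal_to_span[of _ S v] by (auto simp: orthogonal_comp_def orthogonal_commute)
qed

section \<open>Finite orthonormal sets\<close>

definition orthonormal :: "'a::real_inner set \<Rightarrow> bool" where
  "orthonormal B \<longleftrightarrow> (\<forall>x\<in>B. \<forall>y\<in>B. x \<bullet> y = (if x = y then 1 else 0))"

lemma orthonormal_mono: "orthonormal B \<Longrightarrow> A \<subseteq> B \<Longrightarrow> orthonormal A"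
  unfolding orthonormal_def by blast

lemma orthonormal_insert:
  assumes "orthonormal B" "w \<bullet> w = 1" "\<And>b. b \<in> B \<Longrightarrow> w \<bullet> b = 0"
  shows "orthonormal (insert w B)"
  using assms by (force simp: orthonormal_def inner_commute)

lemma independent_orthonormal:
  assumes "orthonormal B"
  shows "independent B"
proof (rule pairwise_orthogonal_independent)
  show "pairwise orthogonal B" "0 \<notin> B"
    using assms by (force simp: orthonormal_def pairwise_def orthogonal_def)+
qed

lemma inner_sum_orthonormal:
  assumes "finite B" "orthonormal B" "b \<in> B"
  shows "(\<Sum>v\<in>B. u v *\<^sub>R v) \<bullet> b = u b"
proof -
  have "(\<Sum>v\<in>B. u v *\<^sub>R v) \<bullet> b = (\<Sum>v\<in>B. if v = b then u v else 0)"
    using assms(2,3) by (auto simp: inner_sum_left orthonormal_def intro!: sum.cong)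
  also have "\<dots> = u b" using assms(1,3) by simp
  finally show ?thesis .
qed

lemma orthonormal_expansion:
  assumes "finite B" "orthonormal B" "s \<in> span B"
  shows "s = (\<Sum>b\<in>B. (s \<bullet> b) *\<^sub>R b)"
proof -
  obtain u where s: "s = (\<Sum>v\<in>B. u v *\<^sub>R v)" using assms(3) span_finite[OF assms(1)] by auto
  then have "\<And>b. b \<in> B \<Longrightarrow> s \<bullet> b = u b" using inner_sum_orthonormal[OF assms(1,2)] by simp
  then show ?thesis using s by simp
qed

lemma orthonormal_extend_vector:
  assumes M: "subspace M" and B: "finite B" "orthonormal B" "B \<subseteq> M" and a: "a \<in> M"
  obtains B' where "finite B'" "orthonormal B'" "B \<subseteq> B'" "B' \<subseteq> M" "a \<in> span B'"
proof (cases "a \<in> span B")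
  case True then show ?thesis using that B by blast
next
  case False
  define a' where "a' = a - (\<Sum>b\<in>B. (a \<bullet> b) *\<^sub>R b)"
  define w where "w = a' /\<^sub>R norm a'"
  have sum_span: "(\<Sum>b\<in>B. (a \<bullet> b) *\<^sub>R b) \<in> span B" by (intro span_sum span_scale span_base)
  then have "a' \<noteq> 0" using False by (auto simp: a'_def)
  have "a' \<bullet> b = 0" if "b \<in> B" for b
    using inner_sum_orthonormal[OF B(1,2) that, of "\<lambda>b. a \<bullet> b"] by (simp add: a'_def inner_diff_left)
  then have "orthonormal (insert w B)"
    using \<open>a' \<noteq> 0\<close> by (intro orthonormal_insert[OF B(2)])
      (simp_all add: w_def dot_square_norm power2_eq_square)
  moreover have "w \<in> M"
    using M B(3) a sum_span span_minimal[OF B(3) M]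
    by (auto simp: w_def a'_def intro!: subspace_scale subspace_diff)
  moreover have "a = norm a' *\<^sub>R w + (\<Sum>b\<in>B. (a \<bullet> b) *\<^sub>R b)"
    using \<open>a' \<noteq> 0\<close> by (simp add: w_def a'_def)
  then have "a \<in> span (insert w B)"
    using sum_span span_mono[of B "insert w B"]
    by (metis insertI1 span_add span_base span_scale subset_insertI subsetD)
  ultimately show ?thesis using that B by (meson finite.insertI insert_subset subset_insertI)
qed

lemma orthonormal_extend:
  assumes M: "subspace M" and T: "finite T" "T \<subseteq> M"
    and B: "finite B" "orthonormal B" "B \<subseteq> M"
  obtains B' where "finite B'" "orthonormal B'" "B \<subseteq> B'" "B' \<subseteq> M" "T \<subseteq> span B'"
  using T B
proof (induction T arbitrary: B thesis rule: finite_induct)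
  case empty then show ?case by blast
next
  case (insert a T)
  obtain B1 where B1: "finite B1" "orthonormal B1" "B \<subseteq> B1" "B1 \<subseteq> M" "a \<in> span B1"
    using orthonormal_extend_vector[OF M insert.prems(3-5)] insert.prems(2) by blast
  obtain B' where B': "finite B'" "orthonormal B'" "B1 \<subseteq> B'" "B' \<subseteq> M" "T \<subseteq> span B'"
    using insert.IH[OF _ _ B1(1,2,4)] insert.prems(2) by blast
  show ?case
    using insert.prems(1)[of B'] B' B1 span_mono[OF B'(3)] by auto
qed

lemma orthonormal_span_diff:
  assumes B: "finite B" "orthonormal B" "A \<subseteq> B" and s: "s \<in> span B" "\<And>a. a \<in> A \<Longrightarrow> s \<bullet> a = 0"
  shows "s \<in> span (B - A)"
proof -
  have "s = (\<Sum>b\<in>B. (s \<bullet> b) *\<^sub>R b)" by (rule orthonormal_expansion[OF B(1,2) s(1)])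
  also have "\<dots> = (\<Sum>b\<in>B - A. (s \<bullet> b) *\<^sub>R b)"
    using s(2) B(1,3) by (intro sum.mono_neutral_right) auto
  also have "\<dots> \<in> span (B - A)" by (intro span_sum span_scale span_base)
  finally show ?thesis .
qed

lemma orthonormal_span_diff_orthogonal:
  assumes "orthonormal B" "A \<subseteq> B" "x \<in> span (B - A)" "y \<in> span A"
  shows "orthogonal x y"
proof -
  have "orthogonal b a" if "b \<in> B - A" "a \<in> A" for a b
    using assms(1,2) that by (auto simp: orthonormal_def orthogonal_def)
  then show ?thesis
    by (meson assms(3,4) orthogonal_commute orthogonal_to_span)
qed

section \<open>The subspaces M\<bottom> + span B\<close>

definition perp_plus_span :: "'a::real_inner set \<Rightarrow> 'a set \<Rightarrow> 'a set" where
  "perp_plus_span M B = {x + y |x y. x \<in> orthogonal_comp M \<and> y \<in> span B}"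

lemma subspace_perp_plus_span: "subspace (perp_plus_span M B)"
  unfolding perp_plus_span_def by (intro subspace_sums subspace_orthogonal_comp subspace_span)

lemma perp_plus_span_mono: "B \<subseteq> B' \<Longrightarrow> perp_plus_span M B \<subseteq> perp_plus_span M B'"
  unfolding perp_plus_span_def using span_mono by blast

lemma perp_plus_span_empty: "perp_plus_span M {} = orthogonal_comp M"
  unfolding perp_plus_span_def by force

lemma orthogonal_comp_subset_perp_plus_span: "orthogonal_comp M \<subseteq> perp_plus_span M B"
  unfolding perp_plus_span_def by (force intro: span_0)

lemma span_subset_perp_plus_span: "span B \<subseteq> perp_plus_span M B"
  unfolding perp_plus_span_def by (force intro: subspace_0[OF subspace_orthogonal_comp])

lemma closed_perp_plus_span:
  assumes "finite B" "orthonormal B" "B \<subseteq> M"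
  shows "closed (perp_plus_span M B)"
proof -
  define Q where "Q y = (\<Sum>b\<in>B. (y \<bullet> b) *\<^sub>R b)" for y
  \<comment> \<open>Q projects orthogonally onto span B and kills orthogonal_comp M\<close>
  have "perp_plus_span M B = (\<lambda>y. y - Q y) -` orthogonal_comp M"
  proof (intro set_eqI iffI)
    fix y assume "y \<in> perp_plus_span M B"
    then obtain m s where y: "y = m + s" "m \<in> orthogonal_comp M" "s \<in> span B"
      by (auto simp: perp_plus_span_def)
    have "Q m = 0" unfolding Q_def using y(2) assms(3)
      by (intro sum.neutral) (auto simp: orthogonal_comp_iff inner_commute)
    moreover have "Q s = s" unfolding Q_def using orthonormal_expansion[OF assms(1,2) y(3)] by simp
    moreover have "Q y = Q m + Q s" unfolding Q_def y(1)
      by (simp add: inner_add_left scaleR_add_left sum.distrib)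
    ultimately show "y \<in> (\<lambda>y. y - Q y) -` orthogonal_comp M" using y by simp
  next
    fix y assume "y \<in> (\<lambda>y. y - Q y) -` orthogonal_comp M"
    moreover have "Q y \<in> span B" unfolding Q_def by (intro span_sum span_scale span_base)
    ultimately show "y \<in> perp_plus_span M B" unfolding perp_plus_span_def by force
  qed
  moreover have "closed ((\<lambda>y. y - Q y) -` orthogonal_comp M)"
    by (intro continuous_closed_vimage closed_orthogonal_comp) (simp add: Q_def continuous_intros)
  ultimately show ?thesis by simp
qed

lemma perp_plus_span_Int_perp_perp:
  assumes "subspace M" "B \<subseteq> M"
  shows "perp_plus_span M B \<inter> orthogonal_comp (orthogonal_comp M) = span B"
proof (intro set_eqI iffI)
  fix x assume x: "x \<in> perp_plus_span M B \<inter> orthogonal_comp (orthogonal_comp M)"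
  then obtain m s where y: "x = m + s" "m \<in> orthogonal_comp M" "s \<in> span B"
    by (auto simp: perp_plus_span_def)
  have "s \<in> M" using span_minimal[OF assms(2,1)] y(3) by blast
  then have "m \<bullet> s = 0" using y(2) by (metis orthogonal_comp_iff inner_commute)
  moreover have "m \<bullet> x = 0" using x y(2) by (simp add: orthogonal_comp_iff)
  ultimately have "m = 0" using y(1) by (simp add: inner_add_right)
  then show "x \<in> span B" using y by simp
next
  fix x assume "x \<in> span B"
  then show "x \<in> perp_plus_span M B \<inter> orthogonal_comp (orthogonal_comp M)"
    using span_subset_perp_plus_span span_minimal[OF assms(2,1)] orthogonal_comp_subset by blast
qed

lemma perp_plus_span_Int:
  assumes "subspace M" "B \<subseteq> M"
  shows "perp_plus_span M B \<inter> M = span B"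
  using perp_plus_span_Int_perp_perp[OF assms] orthogonal_comp_subset[of M]
    span_subset_perp_plus_span span_minimal[OF assms(2,1)] by blast

lemma perp_plus_span_increment:
  assumes M: "subspace M" and B: "finite B" "orthonormal B" "B \<subseteq> M" and "A \<subseteq> B"
  shows "perp_plus_span M B \<inter> orthogonal_comp (perp_plus_span M A) = span (B - A)"
proof (intro set_eqI iffI)
  fix x assume x: "x \<in> perp_plus_span M B \<inter> orthogonal_comp (perp_plus_span M A)"
  then have "x \<in> orthogonal_comp (orthogonal_comp M)"
    using orthogonal_comp_anti_mono[OF orthogonal_comp_subset_perp_plus_span] by blast
  then have "x \<in> span B" using x perp_plus_span_Int_perp_perp[OF M B(3)] by blast
  moreover have "x \<bullet> a = 0" if "a \<in> A" for a
    using x that span_subset_perp_plus_span[of A M] span_base[of a A]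
    by (auto simp: orthogonal_comp_iff inner_commute)
  ultimately show "x \<in> span (B - A)" by (rule orthonormal_span_diff[OF B(1,2) \<open>A \<subseteq> B\<close>])
next
  fix x assume x: "x \<in> span (B - A)"
  then have "x \<in> span B" using span_mono[of "B - A" B] by blast
  then have "x \<in> M" using span_minimal[OF B(3) M] by blast
  have "y \<bullet> x = 0" if y_in: "y \<in> perp_plus_span M A" for y
  proof -
    obtain m s where y: "y = m + s" "m \<in> orthogonal_comp M" "s \<in> span A"
      using y_in unfolding perp_plus_span_def by blast
    have "m \<bullet> x = 0" using y(2) \<open>x \<in> M\<close> by (metis orthogonal_comp_iff inner_commute)
    moreover have "s \<bullet> x = 0"
      using orthonormal_span_diff_orthogonal[OF B(2) \<open>A \<subseteq> B\<close> x y(3)]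
      by (simp add: orthogonal_def inner_commute)
    ultimately show ?thesis using y(1) by (simp add: inner_add_left)
  qed
  then show "x \<in> perp_plus_span M B \<inter> orthogonal_comp (perp_plus_span M A)"
    using \<open>x \<in> span B\<close> span_subset_perp_plus_span by (auto simp: orthogonal_comp_iff)
qed

section \<open>Orthonormal chains\<close>

lemma fin_dim_subspace_span: "finite B \<Longrightarrow> fin_dim_subspace (span B)"
  unfolding fin_dim_subspace_def by (blast intro: subspace_span)

definition orthonormal_chain :: "'a::real_inner set \<Rightarrow> (nat \<Rightarrow> 'a set) \<Rightarrow> bool" where
  "orthonormal_chain M Bs \<longleftrightarrow> Bs 0 = {} \<and>
     (\<forall>n. finite (Bs n) \<and> orthonormal (Bs n) \<and> Bs n \<subseteq> M \<and> Bs n \<subset> Bs (Suc n))"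

lemma orthonormal_extend_strict:
  assumes M: "subspace M" "\<nexists>B. finite B \<and> span B = M" and T: "finite T" "T \<subseteq> M"
    and B: "finite B" "orthonormal B" "B \<subseteq> M"
  obtains B' where "finite B'" "orthonormal B'" "B \<subset> B'" "B' \<subseteq> M" "T \<subseteq> span B'"
proof -
  have "span B \<subseteq> M" using span_minimal[OF B(3) M(1)] .
  then obtain m where m: "m \<in> M" "m \<notin> span B" using M(2) B(1) by blast
  obtain B' where B': "finite B'" "orthonormal B'" "B \<subseteq> B'" "B' \<subseteq> M" "insert m T \<subseteq> span B'"
    using orthonormal_extend[OF M(1) _ _ B, of "insert m T"] T m(1) by blast
  then have "B \<noteq> B'" using m(2) by auto
  then show ?thesis using that B' by auto
qed

lemma orthonormal_chain_exists:
  assumes M: "subspace M" "\<nexists>B. finite B \<and> span B = M" and T: "\<And>n. finite (T n)" "\<And>n. T n \<subseteq> M"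
  obtains Bs where "orthonormal_chain M Bs" "\<And>n. T n \<subseteq> span (Bs (Suc n))"
proof -
  define P where "P n B \<longleftrightarrow> finite B \<and> orthonormal B \<and> B \<subseteq> M \<and> (n = 0 \<longrightarrow> B = {})"
    for n :: nat and B
  have "\<exists>Bs. \<forall>n. P n (Bs n) \<and> Bs n \<subset> Bs (Suc n) \<and> T n \<subseteq> span (Bs (Suc n))"
  proof (rule dependent_nat_choice)
    show "\<exists>B. P 0 B" by (auto simp: P_def orthonormal_def)
  next
    fix B and n :: nat assume "P n B"
    then obtain B' where "finite B'" "orthonormal B'" "B \<subset> B'" "B' \<subseteq> M" "T n \<subseteq> span B'"
      using orthonormal_extend_strict[OF M T] unfolding P_def by metis
    then show "\<exists>B'. P (Suc n) B' \<and> B \<subset> B' \<and> T n \<subseteq> span B'" unfolding P_def by blast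
  qed
  then obtain Bs where Bs: "\<And>n. P n (Bs n)" "\<And>n. Bs n \<subset> Bs (Suc n)"
      "\<And>n. T n \<subseteq> span (Bs (Suc n))"
    by blast
  have "orthonormal_chain M Bs"
    using Bs(1,2) Bs(1)[of 0] unfolding orthonormal_chain_def P_def by simp
  then show ?thesis using that Bs(3) by blast
qed

lemma orthonormal_chain_dim_increment:
  assumes "orthonormal_chain M Bs"
  shows "1 \<le> dim (span (Bs (Suc n) - Bs n))"
proof -
  have "finite (Bs (Suc n))" "orthonormal (Bs (Suc n))" "Bs n \<subset> Bs (Suc n)"
    using assms by (auto simp: orthonormal_chain_def)
  then have "independent (Bs (Suc n) - Bs n)" "finite (Bs (Suc n) - Bs n)" "Bs (Suc n) - Bs n \<noteq> {}"
    using independent_orthonormal orthonormal_mono by blast+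
  then show ?thesis by (simp add: dim_eq_card_independent Suc_le_eq card_gt_0_iff)
qed

lemma Union_differences_eq:
  assumes "A 0 = {}"
  shows "(\<Union>k. A (Suc k) - A k) = (\<Union>k. A k)"
proof -
  have "A k \<subseteq> (\<Union>j. A (Suc j) - A j)" for k
    using assms by (induction k) auto
  then show ?thesis by blast
qed

lemma orthonormal_chain_increment:
  assumes M: "subspace M" and chain: "orthonormal_chain M Bs"
  shows "perp_plus_span M (Bs (Suc n)) \<inter> orthogonal_comp (perp_plus_span M (Bs n))
           = span (Bs (Suc n) - Bs n)"
  using chain perp_plus_span_increment[OF M] by (simp add: orthonormal_chain_def less_imp_le)

lemma orthonormal_chain_increment_orthogonal:
  fixes M :: "'a::{real_inner,complete_space} set"
  assumes M: "closed M" "subspace M" and chain: "orthonormal_chain M Bs"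
    and S: "proj M ` S \<subseteq> span (Bs n)"
  shows "span (Bs (Suc n) - Bs n) \<subseteq> orthogonal_comp (span S)"
proof -
  have B: "orthonormal (Bs (Suc n))" "Bs n \<subseteq> Bs (Suc n)" "Bs (Suc n) \<subseteq> M"
    using chain by (auto simp: orthonormal_chain_def)
  have "span (Bs (Suc n) - Bs n) \<subseteq> M"
    using span_minimal[OF _ M(2), of "Bs (Suc n) - Bs n"] B(3) by blast
  moreover have "span (Bs (Suc n) - Bs n) \<subseteq> orthogonal_comp (proj M ` S)"
    using orthonormal_span_diff_orthogonal[OF B(1,2)] S
    by (force simp: orthogonal_comp_def orthogonal_commute)
  ultimately show ?thesis using orthogonal_comp_proj_image[OF M, of S] by blast
qed

lemma closure_Union_perp_plus_span:
  fixes M :: "'a::{real_inner,complete_space} set"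
  assumes M: "closed M" "subspace M" and dense: "M \<subseteq> closure (\<Union>k. span (B k))"
  shows "closure (\<Union>k. perp_plus_span M (B k)) = UNIV"
proof -
  have "x \<in> closure (\<Union>k. perp_plus_span M (B k))" for x
    unfolding closure_approachable
  proof (intro allI impI)
    fix e :: real assume "e > 0"
    then obtain k s where s: "s \<in> span (B k)" "dist s (proj M x) < e"
      using dense proj_in[OF M] by (force simp: closure_approachable)
    \<comment> \<open>split x along M and its complement, and approximate only the M-component\<close>
    have "(x - proj M x) + s \<in> perp_plus_span M (B k)"
      unfolding perp_plus_span_def using proj_residual_orthogonal[OF M] s(1) by blast
    moreover have "dist ((x - proj M x) + s) x = dist s (proj M x)"
      by (simp add: dist_norm algebra_simps)
    ultimately show "\<exists>y\<in>\<Union>k. perp_plus_span M (B k). dist y x < e"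
      using s(2) by (intro bexI[of _ "(x - proj M x) + s"]) auto
  qed
  then show ?thesis by blast
qed

lemma Union_atLeast_1_eq: "(\<Union>n\<in>{1..}. A n) = (\<Union>k. A (Suc k))"
  by (metis One_nat_def atLeast_Suc_greaterThan greaterThan_0 image_image)

lemma measurably_adapted_perp_plus_span:
  fixes M :: "'a::{real_inner,complete_space} set"
  assumes M: "closed M" "subspace M" and chain: "orthonormal_chain M Bs"
    and dense: "M \<subseteq> closure (\<Union>k. span (Bs (Suc k)))"
    and small: "\<And>n. n \<ge> 1 \<Longrightarrow>
       gauss (span (Bs (Suc n) - Bs n)) {v \<in> span (Bs (Suc n) - Bs n). N v > 1 / 2 ^ n} < 1 / 2 ^ n"
  shows "measurably_adapted N (\<lambda>k. perp_plus_span M (Bs k))"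
  unfolding measurably_adapted_def orthonormal_chain_increment[OF M(2) chain]
proof (intro conjI allI impI)
  fix n :: nat
  show "closed (perp_plus_span M (Bs n))"
    using chain by (auto simp: orthonormal_chain_def intro!: closed_perp_plus_span)
  show "perp_plus_span M (Bs n) \<subseteq> perp_plus_span M (Bs (Suc n))"
    using chain by (intro perp_plus_span_mono) (auto simp: orthonormal_chain_def)
  show "fin_dim_subspace (span (Bs (Suc n) - Bs n))"
    using chain by (intro fin_dim_subspace_span) (simp add: orthonormal_chain_def)
  show "1 \<le> dim (span (Bs (Suc n) - Bs n))" by (rule orthonormal_chain_dim_increment[OF chain])
next
  have "closure (\<Union>k. perp_plus_span M (Bs (Suc k))) = UNIV"
    by (rule closure_Union_perp_plus_span[OF M dense])
  then show "closure (\<Union>n\<in>{1..}. perp_plus_span M (Bs n)) = UNIV"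
    unfolding Union_atLeast_1_eq .
qed (use subspace_perp_plus_span small in auto)

lemma span_Union_increments:
  fixes M :: "'a::{real_inner,complete_space} set"
  assumes M: "subspace M" and chain: "orthonormal_chain M Bs"
  defines "F \<equiv> \<lambda>k. perp_plus_span M (Bs k)"
  shows "span (\<Union>n\<in>{1..}. F n \<inter> orthogonal_comp (F (n - 1))) = span (\<Union>k. Bs k)"
proof -
  have "(\<Union>n\<in>{1..}. F n \<inter> orthogonal_comp (F (n - 1))) = (\<Union>k. span (Bs (Suc k) - Bs k))"
    unfolding Union_atLeast_1_eq F_def by (simp add: orthonormal_chain_increment[OF M chain])
  moreover have "span (\<Union>k. span (Bs (Suc k) - Bs k)) = span (\<Union>k. Bs (Suc k) - Bs k)"
    by (rule span_eq[THEN iffD2]) (auto intro: span_base span_mono[THEN subsetD])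
  moreover have "(\<Union>k. Bs (Suc k) - Bs k) = (\<Union>k. Bs k)"
    using chain by (intro Union_differences_eq) (simp add: orthonormal_chain_def)
  ultimately show ?thesis by simp
qed

lemma measurable_norm_finite_sets:
  assumes "measurable_norm N"
  obtains S where "\<And>n. finite (S n)"
    "\<And>n F1. fin_dim_subspace F1 \<Longrightarrow> F1 \<subseteq> orthogonal_comp (span (S n)) \<Longrightarrow>
       gauss F1 {v \<in> F1. N v > 1 / 2 ^ n} < 1 / 2 ^ n"
proof -
  have "\<exists>S. finite S \<and> (\<forall>F1. fin_dim_subspace F1 \<and> F1 \<subseteq> orthogonal_comp (span S) \<longrightarrow>
           gauss F1 {v \<in> F1. N v > 1 / 2 ^ n} < 1 / 2 ^ n)" for n :: nat
  proof -
    obtain F0 where "fin_dim_subspace F0" "\<forall>F1. fin_dim_subspace F1 \<and> F1 \<subseteq> orthogonal_comp F0 \<longrightarrow>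
        gauss F1 {v \<in> F1. N v > 1 / 2 ^ n} < 1 / 2 ^ n"
      using assms unfolding measurable_norm_def
      by (elim conjE allE[of _ "1 / 2 ^ n"] impE exE) auto
    then show ?thesis unfolding fin_dim_subspace_def by blast
  qed
  then show ?thesis using that by (metis (no_types))
qed

lemma separable_dense_sequence:
  assumes "separable_space (euclidean :: 'a topology)"
  obtains d :: "nat \<Rightarrow> 'a::metric_space" where "closure (range d) = UNIV"
proof -
  obtain C :: "'a set" where "countable C" "closure C = UNIV"
    using assms by (auto simp: separable_space_def)
  moreover have "C \<noteq> {}" using \<open>closure C = UNIV\<close> by auto
  ultimately show ?thesis using that[of "from_nat_into C"] by simp
qed

lemma adapted_orthonormal_chain_exists:
  fixes M :: "'a::{real_inner,complete_space} set"
  assumes sep: "separable_space (euclidean :: 'a topology)" and mn: "measurable_norm N"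
    and M: "closed M" "subspace M" "\<nexists>B. finite B \<and> span B = M"
  obtains Bs where "orthonormal_chain M Bs" "M \<subseteq> closure (\<Union>k. span (Bs (Suc k)))"
    "\<And>n. n \<ge> 1 \<Longrightarrow>
       gauss (span (Bs (Suc n) - Bs n)) {v \<in> span (Bs (Suc n) - Bs n). N v > 1 / 2 ^ n} < 1 / 2 ^ n"
proof -
  obtain d :: "nat \<Rightarrow> 'a" where d: "closure (range d) = UNIV"
    using separable_dense_sequence[OF sep] .
  obtain S where S_fin: "\<And>n. finite (S n)" and S_small: "\<And>n F1. fin_dim_subspace F1 \<Longrightarrow>
      F1 \<subseteq> orthogonal_comp (span (S n)) \<Longrightarrow> gauss F1 {v \<in> F1. N v > 1 / 2 ^ n} < 1 / 2 ^ n"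
    using measurable_norm_finite_sets[OF mn] by metis
  \<comment> \<open>B (k+1) absorbs the k-th dense point (for density) and the directions S (k+1)
    that the next increment must avoid\<close>
  define T where "T k = insert (proj M (d k)) (proj M ` S (Suc k))" for k
  have "finite (T k)" "T k \<subseteq> M" for k
    using S_fin proj_in[OF M(1,2)] by (auto simp: T_def)
  then obtain Bs where chain: "orthonormal_chain M Bs" and absorb: "\<And>k. T k \<subseteq> span (Bs (Suc k))"
    using orthonormal_chain_exists[OF M(2,3)] by metis
  have "proj M ` range d \<subseteq> (\<Union>k. span (Bs (Suc k)))" using absorb by (auto simp: T_def)
  then have dense: "M \<subseteq> closure (\<Union>k. span (Bs (Suc k)))"
    using closure_proj_image_dense[OF M(1,2) d] closure_mono by blast
  have small: "gauss (span (Bs (Suc n) - Bs n)) {v \<in> span (Bs (Suc n) - Bs n). N v > 1 / 2 ^ n}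
      < 1 / 2 ^ n" if "n \<ge> 1" for n
  proof (rule S_small)
    show "fin_dim_subspace (span (Bs (Suc n) - Bs n))"
      using chain by (intro fin_dim_subspace_span) (simp add: orthonormal_chain_def)
    have "proj M ` S n \<subseteq> span (Bs n)" using absorb[of "n - 1"] that by (simp add: T_def)
    then show "span (Bs (Suc n) - Bs n) \<subseteq> orthogonal_comp (span (S n))"
      by (rule orthonormal_chain_increment_orthogonal[OF M(1,2) chain])
  qed
  then show ?thesis using that chain dense by blast
qed

theorem lemma2p1:
  fixes N :: "'a::{real_inner, complete_space} \<Rightarrow> real"
    and M0 :: "'a set"
  assumes sep: "separable_space (euclidean :: 'a topology)"
    and infdim: "\<not> (\<exists>B. finite B \<and> span B = (UNIV :: 'a set))"
    and mn: "measurable_norm N"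
    and M0: "closed M0" "subspace M0" "\<not> (\<exists>B. finite B \<and> span B = M0)"
  shows "\<exists>F :: nat \<Rightarrow> 'a set. measurably_adapted N F \<and> F 0 = orthogonal_comp M0 \<and>
           F 0 \<subseteq> F 1 \<and> fin_dim_subspace (F 1 \<inter> M0) \<and>
           span (\<Union>n\<in>{1..}. F n \<inter> orthogonal_comp (F (n - 1))) \<subseteq> M0 \<and>
           M0 \<subseteq> closure (span (\<Union>n\<in>{1..}. F n \<inter> orthogonal_comp (F (n - 1))))"
proof -
  \<comment> \<open>infdim is implied by M0(3) and not needed\<close>
  obtain Bs where chain: "orthonormal_chain M0 Bs" and dense: "M0 \<subseteq> closure (\<Union>k. span (Bs (Suc k)))"
    and small: "\<And>n. n \<ge> 1 \<Longrightarrow>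
       gauss (span (Bs (Suc n) - Bs n)) {v \<in> span (Bs (Suc n) - Bs n). N v > 1 / 2 ^ n} < 1 / 2 ^ n"
    using adapted_orthonormal_chain_exists[OF sep mn M0] by blast
  have Bs: "Bs 0 = {}" "Bs 0 \<subseteq> Bs 1" "finite (Bs 1)" "\<And>k. Bs k \<subseteq> M0"
    using chain by (auto simp: orthonormal_chain_def)
  have "(\<Union>k. span (Bs (Suc k))) \<subseteq> span (\<Union>k. Bs k)" by (intro UN_least span_mono) auto
  then have "M0 \<subseteq> closure (span (\<Union>k. Bs k))" using dense closure_mono by blast
  moreover have "span (\<Union>k. Bs k) \<subseteq> M0" using Bs(4) by (intro span_minimal M0(2)) blast
  ultimately show ?thesis
    using measurably_adapted_perp_plus_span[OF M0(1,2) chain dense small]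
      span_Union_increments[OF M0(2) chain] perp_plus_span_mono[OF Bs(2)]
      perp_plus_span_Int[OF M0(2) Bs(4)] fin_dim_subspace_span[OF Bs(3)]
    by (intro exI[of _ "\<lambda>k. perp_plus_span M0 (Bs k)"]) (simp add: Bs(1) perp_plus_span_empty)
qed

end
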